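(* Let $k\ge 1$, $H>0$, $\beta>0$, $h>0$, and consider a hierarchical-leadership flock $[0,1,\dots,k]$ with leader sets $\mathcal{L}(i)\subseteq\{0,\dots,i-1\}$, $\mathcal{L}(i)\neq\varnothing$ for $i\ge1$. Let $\tilde x_0[n],\dots,\tilde x_k[n]\in\mathbb{R}^3$ ($n\ge 0$) be positions, for $j\in\mathcal{L}(i)$ let $a_{ij}[n]=H/(1+|\tilde x_j[n]-\tilde x_i[n]|^2/2)^{\beta}$ and $a_{ij}[n]=0$ otherwise, $d_i[n]=\sum_{j\in\mathcal{L}(i)}a_{ij}[n]$, and let $L_n$ be the $k\times k$ matrix (indices $1,\dots,k$) with $(L_n)_{ii}=d_i[n]$, $(L_n)_{ij}=-a_{ij}[n]$ for $1\le j<i$, $(L_n)_{ij}=0$ for $j>i$; put $S[n]=I-hL_n$. Suppose $|x[n]|^2\le B$ for all $n\ge0$, where $x[n]=(\tilde x_i[n]-\tilde x_0[n])_{i=1}^k\in\mathbb{R}^{3k}$, let $d_\ast=H/(1+B)^\beta$, $\rho_h=1-hd_\ast$, and assume $0<h<\frac{1}{2kH}$. Let $T$ be the $k\times k$ matrix with $T_{ij}=1$ for $i\ge j$ and $T_{ij}=0$ otherwise. Then for all $n\ge 0$, \[S[n]\prec\rho_hT\quad\text{and}\quad S[n-1]\cdots S[0]\prec\rho_h^{\,n}T^n.\]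
   Context: $B\prec C$ means $|b_{ij}|\le c_{ij}$ for all entries. A hierarchical-leadership flock is one whose agents are labeled $0,\dots,k$ so that $a_{ij}>0$ only if $j<i$ and each agent $i>0$ has a nonempty leader set $\mathcal{L}(i)=\{j:a_{ij}>0\}$. For $n=0$ the empty product is the identity. *)

theory Defs
  imports "HOL-Analysis.Analysis" "Jordan_Normal_Form.Matrix"
begin

definition mat_prec :: "real mat \<Rightarrow> real mat \<Rightarrow> bool" (infix "\<prec>\<^sub>m" 50) where
  "B \<prec>\<^sub>m C \<longleftrightarrow> dim_row B = dim_row C \<and> dim_col B = dim_col C \<and>
     (\<forall>i < dim_row B. \<forall>j < dim_col B. \<bar>B $$ (i, j)\<bar> \<le> C $$ (i, j))"

definition hier_leader_sets :: "nat \<Rightarrow> (nat \<Rightarrow> nat set) \<Rightarrow> bool" where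
  "hier_leader_sets k Ld \<longleftrightarrow> (\<forall>i\<in>{1..k}. Ld i \<subseteq> {0..<i} \<and> Ld i \<noteq> {})"

definition flock_a :: "real \<Rightarrow> real \<Rightarrow> (nat \<Rightarrow> nat set) \<Rightarrow> (nat \<Rightarrow> nat \<Rightarrow> real^3)
    \<Rightarrow> nat \<Rightarrow> nat \<Rightarrow> nat \<Rightarrow> real" where
  "flock_a H \<beta> Ld xt n i j =
     (if j \<in> Ld i then H / (1 + (norm (xt n j - xt n i))\<^sup>2 / 2) powr \<beta> else 0)"

definition flock_d :: "real \<Rightarrow> real \<Rightarrow> (nat \<Rightarrow> nat set) \<Rightarrow> (nat \<Rightarrow> nat \<Rightarrow> real^3)
    \<Rightarrow> nat \<Rightarrow> nat \<Rightarrow> real" where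
  "flock_d H \<beta> Ld xt n i = (\<Sum>j\<in>Ld i. flock_a H \<beta> Ld xt n i j)"

text \<open>The k\<times>k matrix L_n; paper indices 1..k correspond to 0-based matrix indices 0..k-1.\<close>
definition flock_L :: "nat \<Rightarrow> real \<Rightarrow> real \<Rightarrow> (nat \<Rightarrow> nat set) \<Rightarrow> (nat \<Rightarrow> nat \<Rightarrow> real^3)
    \<Rightarrow> nat \<Rightarrow> real mat" where
  "flock_L k H \<beta> Ld xt n = mat k k (\<lambda>(r, c).
     if r = c then flock_d H \<beta> Ld xt n (r + 1)
     else if c < r then - flock_a H \<beta> Ld xt n (r + 1) (c + 1)
     else 0)"

definition flock_S :: "nat \<Rightarrow> real \<Rightarrow> real \<Rightarrow> real \<Rightarrow> (nat \<Rightarrow> nat set) \<Rightarrow> (nat \<Rightarrow> nat \<Rightarrow> real^3)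
    \<Rightarrow> nat \<Rightarrow> real mat" where
  "flock_S k h H \<beta> Ld xt n = 1\<^sub>m k - h \<cdot>\<^sub>m flock_L k H \<beta> Ld xt n"

fun flock_Sprod :: "nat \<Rightarrow> real \<Rightarrow> real \<Rightarrow> real \<Rightarrow> (nat \<Rightarrow> nat set) \<Rightarrow> (nat \<Rightarrow> nat \<Rightarrow> real^3)
    \<Rightarrow> nat \<Rightarrow> real mat" where
  "flock_Sprod k h H \<beta> Ld xt 0 = 1\<^sub>m k"
| "flock_Sprod k h H \<beta> Ld xt (Suc n) = flock_S k h H \<beta> Ld xt n * flock_Sprod k h H \<beta> Ld xt n"

definition lower_ones :: "nat \<Rightarrow> real mat" where
  "lower_ones k = mat k k (\<lambda>(i, j). if j \<le> i then 1 else 0)"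

end

theory Submission
  imports Defs
begin

text \<open>
  Every leader of agent i is at distance at most sqrt (2 B) from i, since both lie within the
  bound B on the squared offsets from agent 0. Hence every weight a_ij with j a leader lies
  between d_* = H / (1 + B) powr \<beta> and H, and every d_i between d_* and k H. For h < 1 / (2 k H)
  the diagonal entries 1 - h d_i of S[n] lie in [1/2, \<rho>_h] and the off-diagonal entries h a_ij in
  [0, 1/2], which gives S[n] \<prec> \<rho>_h T. Entrywise domination is preserved under matrix products
  (the dominating matrices are necessarily nonnegative), so the bound on the products follows
  by induction.
\<close>

lemma mat_prec_mult:
  assumes A: "A \<in> carrier_mat n m" and B: "B \<in> carrier_mat m p"
    and C: "C \<in> carrier_mat n m" and D: "D \<in> carrier_mat m p"
    and AC: "A \<prec>\<^sub>m C" and BD: "B \<prec>\<^sub>m D"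
  shows "A * B \<prec>\<^sub>m C * D"
  unfolding mat_prec_def
proof (intro conjI allI impI)
  show "dim_row (A * B) = dim_row (C * D)" "dim_col (A * B) = dim_col (C * D)"
    using A B C D by auto
  fix i j assume "i < dim_row (A * B)" and "j < dim_col (A * B)"
  then have i: "i < n" and j: "j < p" using A B by auto
  have AC_entry: "\<bar>A $$ (i, l)\<bar> \<le> C $$ (i, l)" if "l < m" for l
    using AC A i that unfolding mat_prec_def by auto
  have BD_entry: "\<bar>B $$ (l, j)\<bar> \<le> D $$ (l, j)" if "l < m" for l
    using BD B j that unfolding mat_prec_def by auto
  have "\<bar>(A * B) $$ (i, j)\<bar> = \<bar>\<Sum>l<m. A $$ (i, l) * B $$ (l, j)\<bar>"
    using A B i j by (simp add: scalar_prod_def lessThan_atLeast0)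
  also have "\<dots> \<le> (\<Sum>l<m. \<bar>A $$ (i, l) * B $$ (l, j)\<bar>)"
    by (rule sum_abs)
  also have "\<dots> \<le> (\<Sum>l<m. C $$ (i, l) * D $$ (l, j))"
  proof (rule sum_mono)
    fix l assume "l \<in> {..<m}"
    then have "\<bar>A $$ (i, l)\<bar> * \<bar>B $$ (l, j)\<bar> \<le> C $$ (i, l) * D $$ (l, j)"
      using AC_entry BD_entry by (intro mult_mono) (auto intro: order_trans[OF abs_ge_zero])
    then show "\<bar>A $$ (i, l) * B $$ (l, j)\<bar> \<le> C $$ (i, l) * D $$ (l, j)"
      by (simp only: abs_mult)
  qed
  also have "\<dots> = (C * D) $$ (i, j)"
    using C D i j by (simp add: scalar_prod_def lessThan_atLeast0)
  finally show "\<bar>(A * B) $$ (i, j)\<bar> \<le> (C * D) $$ (i, j)" .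
qed

lemma mat_prec_one: "1\<^sub>m n \<prec>\<^sub>m 1\<^sub>m n"
  unfolding mat_prec_def by simp

lemma pow_mat_Suc_left:
  assumes "A \<in> carrier_mat n n"
  shows "A ^\<^sub>m Suc k = A * A ^\<^sub>m k"
proof (induction k)
  case 0
  then show ?case using assms by simp
next
  case (Suc k)
  have "A ^\<^sub>m Suc (Suc k) = (A * A ^\<^sub>m k) * A"
    using Suc by simp
  also have "\<dots> = A * A ^\<^sub>m Suc k"
    using assms by (simp add: assoc_mult_mat[of A n n "A ^\<^sub>m k" n A n])
  finally show ?case .
qed

lemma smult_pow_mat:
  fixes A :: "'a :: comm_semiring_1 mat"
  assumes "A \<in> carrier_mat n n"
  shows "(a \<cdot>\<^sub>m A) ^\<^sub>m k = a ^ k \<cdot>\<^sub>m A ^\<^sub>m k"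
proof (induction k)
  case 0
  then show ?case using assms by (intro eq_matI) auto
next
  case (Suc k)
  have "(a \<cdot>\<^sub>m A) ^\<^sub>m Suc k = (a ^ k \<cdot>\<^sub>m A ^\<^sub>m k) * (a \<cdot>\<^sub>m A)"
    using Suc by simp
  also have "\<dots> = a ^ k \<cdot>\<^sub>m (A ^\<^sub>m k * (a \<cdot>\<^sub>m A))"
    by (rule mult_smult_assoc_mat) (use assms in auto)
  also have "\<dots> = a ^ k \<cdot>\<^sub>m (a \<cdot>\<^sub>m (A ^\<^sub>m k * A))"
    by (subst mult_smult_distrib) (use assms in auto)
  also have "\<dots> = a ^ Suc k \<cdot>\<^sub>m A ^\<^sub>m Suc k"
    by (rule eq_matI) (auto simp: ac_simps)
  finally show ?case .
qed

lemma mat_prec_pow: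
  assumes P0: "P 0 = 1\<^sub>m n" and P_Suc: "\<And>i. P (Suc i) = A i * P i"
    and A: "\<And>i. A i \<in> carrier_mat n n" and C: "C \<in> carrier_mat n n"
    and AC: "\<And>i. A i \<prec>\<^sub>m C"
  shows "P k \<prec>\<^sub>m C ^\<^sub>m k"
proof -
  have "P k \<in> carrier_mat n n \<and> P k \<prec>\<^sub>m C ^\<^sub>m k"
  proof (induction k)
    case 0
    show ?case using P0 C mat_prec_one by simp
  next
    case (Suc k)
    then have "A k * P k \<prec>\<^sub>m C * C ^\<^sub>m k"
      using A C AC by (intro mat_prec_mult) auto
    then show ?case
      using Suc A pow_mat_Suc_left[OF C] by (auto simp: P_Suc intro: mult_carrier_mat)
  qed
  then show ?thesis ..
qed

lemma sq_norm_diff_le: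
  fixes x y :: "'a :: real_normed_vector"
  shows "(norm (x - y))\<^sup>2 \<le> 2 * ((norm x)\<^sup>2 + (norm y)\<^sup>2)"
proof -
  have "(norm (x - y))\<^sup>2 \<le> (norm x + norm y)\<^sup>2"
    by (intro power_mono norm_triangle_ineq4) simp
  also have "\<dots> \<le> 2 * ((norm x)\<^sup>2 + (norm y)\<^sup>2)"
    using sum_squares_bound[of "norm x" "norm y"] by (simp add: power2_sum)
  finally show ?thesis .
qed

lemma sq_dist_le_twice_sum_sq_offsets:
  fixes p :: "nat \<Rightarrow> 'a :: real_normed_vector"
  assumes i: "i \<in> {1..k}" and ji: "j < i"
  shows "(norm (p j - p i))\<^sup>2 \<le> 2 * (\<Sum>l = 1..k. (norm (p l - p 0))\<^sup>2)"
proof (cases "j = 0")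
  case True
  have "(norm (p i - p 0))\<^sup>2 \<le> (\<Sum>l = 1..k. (norm (p l - p 0))\<^sup>2)"
    using i by (intro member_le_sum) auto
  moreover have "0 \<le> (\<Sum>l = 1..k. (norm (p l - p 0))\<^sup>2)"
    by (intro sum_nonneg) simp
  ultimately show ?thesis
    using True by (simp add: norm_minus_commute)
next
  case False
  have "(norm (p j - p i))\<^sup>2 \<le> 2 * ((norm (p j - p 0))\<^sup>2 + (norm (p i - p 0))\<^sup>2)"
    using sq_norm_diff_le[of "p j - p 0" "p i - p 0"] by simp
  also have "(norm (p j - p 0))\<^sup>2 + (norm (p i - p 0))\<^sup>2 = (\<Sum>l\<in>{i, j}. (norm (p l - p 0))\<^sup>2)"
    using ji by simp
  also have "\<dots> \<le> (\<Sum>l = 1..k. (norm (p l - p 0))\<^sup>2)"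
    using i ji False by (intro sum_mono2) auto
  finally show ?thesis by simp
qed

lemma flock_a_nonneg: "0 \<le> H \<Longrightarrow> 0 \<le> flock_a H \<beta> Ld xt n i j"
  unfolding flock_a_def by simp

lemma flock_a_le:
  assumes "0 \<le> H" and "0 \<le> \<beta>"
  shows "flock_a H \<beta> Ld xt n i j \<le> H"
proof -
  have "1 \<le> (1 + (norm (xt n j - xt n i))\<^sup>2 / 2) powr \<beta>"
    using assms(2) by (intro ge_one_powr_ge_zero) auto
  then show ?thesis
    using assms(1) unfolding flock_a_def by (simp add: divide_le_eq mult_le_cancel_left1)
qed

lemma flock_a_ge:
  assumes "0 \<le> H" and "0 \<le> \<beta>" and "j \<in> Ld i"
    and "(norm (xt n j - xt n i))\<^sup>2 \<le> 2 * B"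
  shows "H / (1 + B) powr \<beta> \<le> flock_a H \<beta> Ld xt n i j"
proof -
  let ?q = "1 + (norm (xt n j - xt n i))\<^sup>2 / 2"
  have q_pos: "0 < ?q"
    by (simp add: add_pos_nonneg)
  have "?q powr \<beta> \<le> (1 + B) powr \<beta>"
    using assms(2,4) q_pos by (intro powr_mono2) auto
  then show ?thesis
    using assms(1,3) q_pos unfolding flock_a_def by (simp add: frac_le)
qed

lemma flock_d_le:
  assumes "0 \<le> H" and "0 \<le> \<beta>" and "finite (Ld i)"
  shows "flock_d H \<beta> Ld xt n i \<le> real (card (Ld i)) * H"
proof -
  have "flock_d H \<beta> Ld xt n i \<le> (\<Sum>j\<in>Ld i. H)"
    unfolding flock_d_def using assms(1,2) by (intro sum_mono flock_a_le)
  then show ?thesis by simp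
qed

lemma flock_a_le_flock_d:
  assumes "0 \<le> H" and "finite (Ld i)" and "j \<in> Ld i"
  shows "flock_a H \<beta> Ld xt n i j \<le> flock_d H \<beta> Ld xt n i"
  unfolding flock_d_def using assms by (intro member_le_sum flock_a_nonneg)

lemma flock_S_entry:
  assumes "r < k" and "c < k"
  shows "flock_S k h H \<beta> Ld xt n $$ (r, c) =
    (if r = c then 1 - h * flock_d H \<beta> Ld xt n (r + 1)
     else if c < r then h * flock_a H \<beta> Ld xt n (r + 1) (c + 1) else 0)"
  using assms unfolding flock_S_def flock_L_def by simp

lemma flock_S_carrier: "flock_S k h H \<beta> Ld xt n \<in> carrier_mat k k"
  unfolding flock_S_def flock_L_def by auto

lemma lower_ones_carrier: "lower_ones k \<in> carrier_mat k k"
  unfolding lower_ones_def by simp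

locale hierarchical_flock =
  fixes k :: nat and H \<beta> h B :: real
    and Ld :: "nat \<Rightarrow> nat set" and xt :: "nat \<Rightarrow> nat \<Rightarrow> real^3"
  assumes k_ge_1: "k \<ge> 1" and H_pos: "H > 0" and \<beta>_pos: "\<beta> > 0" and h_pos: "h > 0"
    and leaders: "hier_leader_sets k Ld"
    and offsets_bounded: "\<And>n. (\<Sum>i = 1..k. (norm (xt n i - xt n 0))\<^sup>2) \<le> B"
    and h_small: "h < 1 / (2 * real k * H)"
begin

definition d_min :: real where
  "d_min = H / (1 + B) powr \<beta>"

definition \<rho> :: real where
  "\<rho> = 1 - h * d_min"

lemma B_nonneg: "0 \<le> B"
  using offsets_bounded[of 0] by (meson order_trans sum_nonneg zero_le_power2)

lemma d_min_le_H: "d_min \<le> H"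
proof -
  have "1 \<le> (1 + B) powr \<beta>"
    using B_nonneg \<beta>_pos by (intro ge_one_powr_ge_zero) auto
  then show ?thesis
    unfolding d_min_def using H_pos by (simp add: divide_le_eq)
qed

lemma h_k_H_lt_half: "h * (real k * H) < 1 / 2"
  using h_small k_ge_1 H_pos by (simp add: field_simps)

lemma h_H_lt_half: "h * H < 1 / 2"
proof -
  have "h * H \<le> h * (real k * H)"
    using k_ge_1 H_pos h_pos by simp
  then show ?thesis
    using h_k_H_lt_half by linarith
qed

lemma leaders_subset: "i \<in> {1..k} \<Longrightarrow> Ld i \<subseteq> {0..<i}"
  using leaders unfolding hier_leader_sets_def by blast

lemma leaders_nonempty: "i \<in> {1..k} \<Longrightarrow> Ld i \<noteq> {}"
  using leaders unfolding hier_leader_sets_def by blast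

lemma d_min_le_flock_a:
  assumes i: "i \<in> {1..k}" and j: "j \<in> Ld i"
  shows "d_min \<le> flock_a H \<beta> Ld xt n i j"
proof -
  have "j < i"
    using leaders_subset[OF i] j by auto
  then have "(norm (xt n j - xt n i))\<^sup>2 \<le> 2 * B"
    using sq_dist_le_twice_sum_sq_offsets[OF i, of j "xt n"] offsets_bounded[of n] by linarith
  then show ?thesis
    unfolding d_min_def using H_pos \<beta>_pos j by (intro flock_a_ge) auto
qed

lemma flock_d_bounds:
  assumes i: "i \<in> {1..k}"
  shows "d_min \<le> flock_d H \<beta> Ld xt n i" and "flock_d H \<beta> Ld xt n i \<le> real k * H"
proof -
  have fin: "finite (Ld i)"
    using leaders_subset[OF i] finite_subset by blast
  obtain j where j: "j \<in> Ld i"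
    using leaders_nonempty[OF i] by blast
  show "d_min \<le> flock_d H \<beta> Ld xt n i"
    using flock_a_le_flock_d[where Ld = Ld and i = i, OF less_imp_le[OF H_pos] fin j]
    by (rule order_trans[OF d_min_le_flock_a[OF i j]])
  have "card (Ld i) \<le> k"
    using card_mono[OF _ leaders_subset[OF i]] i by fastforce
  have "flock_d H \<beta> Ld xt n i \<le> real (card (Ld i)) * H"
    by (rule flock_d_le) (use H_pos \<beta>_pos fin in auto)
  also have "\<dots> \<le> real k * H"
    using \<open>card (Ld i) \<le> k\<close> H_pos by simp
  finally show "flock_d H \<beta> Ld xt n i \<le> real k * H" .
qed

lemma flock_S_prec: "flock_S k h H \<beta> Ld xt n \<prec>\<^sub>m \<rho> \<cdot>\<^sub>m lower_ones k"
  unfolding mat_prec_def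
proof (intro conjI allI impI)
  show "dim_row (flock_S k h H \<beta> Ld xt n) = dim_row (\<rho> \<cdot>\<^sub>m lower_ones k)"
    and "dim_col (flock_S k h H \<beta> Ld xt n) = dim_col (\<rho> \<cdot>\<^sub>m lower_ones k)"
    using carrier_matD[OF flock_S_carrier] carrier_matD[OF lower_ones_carrier] by simp_all
  fix r c assume "r < dim_row (flock_S k h H \<beta> Ld xt n)" and "c < dim_col (flock_S k h H \<beta> Ld xt n)"
  then have r: "r < k" and c: "c < k"
    using carrier_matD[OF flock_S_carrier] by auto
  have T_entry: "(\<rho> \<cdot>\<^sub>m lower_ones k) $$ (r, c) = (if c \<le> r then \<rho> else 0)"
    using r c unfolding lower_ones_def by simp
  show "\<bar>flock_S k h H \<beta> Ld xt n $$ (r, c)\<bar> \<le> (\<rho> \<cdot>\<^sub>m lower_ones k) $$ (r, c)"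
  proof (cases "r = c")
    case True
    have "r + 1 \<in> {1..k}"
      using r by simp
    from flock_d_bounds[OF this, of n]
    have "h * d_min \<le> h * flock_d H \<beta> Ld xt n (r + 1)"
      and "h * flock_d H \<beta> Ld xt n (r + 1) \<le> h * (real k * H)"
      using h_pos by (simp_all only: mult_le_cancel_left_pos)
    then have "\<bar>1 - h * flock_d H \<beta> Ld xt n (r + 1)\<bar> \<le> \<rho>"
      unfolding \<rho>_def abs_le_iff using h_k_H_lt_half by linarith
    then show ?thesis
      using True T_entry flock_S_entry[OF r c] by simp
  next
    case False
    have "0 \<le> h * flock_a H \<beta> Ld xt n (r + 1) (c + 1)"
      and "h * flock_a H \<beta> Ld xt n (r + 1) (c + 1) \<le> h * H"
      using H_pos \<beta>_pos h_pos by (simp_all add: flock_a_nonneg flock_a_le)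
    moreover have "1 / 2 < \<rho>"
    proof -
      have "h * d_min \<le> h * H"
        using d_min_le_H h_pos by simp
      then show ?thesis
        unfolding \<rho>_def using h_H_lt_half by linarith
    qed
    ultimately show ?thesis
      using False r c T_entry flock_S_entry h_H_lt_half by auto
  qed
qed

lemma flock_Sprod_prec:
  "flock_Sprod k h H \<beta> Ld xt n \<prec>\<^sub>m \<rho> ^ n \<cdot>\<^sub>m (lower_ones k ^\<^sub>m n)"
proof -
  have "flock_Sprod k h H \<beta> Ld xt n \<prec>\<^sub>m (\<rho> \<cdot>\<^sub>m lower_ones k) ^\<^sub>m n"
    using flock_S_carrier lower_ones_carrier flock_S_prec
    by (intro mat_prec_pow[where A = "flock_S k h H \<beta> Ld xt"]) auto
  then show ?thesis
    using smult_pow_mat[OF lower_ones_carrier] by simp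
qed

end

theorem corollary1:
  fixes k :: nat and H \<beta> h B :: real
    and Ld :: "nat \<Rightarrow> nat set" and xt :: "nat \<Rightarrow> nat \<Rightarrow> real^3"
  assumes "k \<ge> 1" and "H > 0" and "\<beta> > 0" and "h > 0"
    and "hier_leader_sets k Ld"
    and "\<And>n. (\<Sum>i = 1..k. (norm (xt n i - xt n 0))\<^sup>2) \<le> B"
    and "h < 1 / (2 * real k * H)"
  shows "\<forall>n. flock_S k h H \<beta> Ld xt n \<prec>\<^sub>m (1 - h * (H / (1 + B) powr \<beta>)) \<cdot>\<^sub>m lower_ones k
          \<and> flock_Sprod k h H \<beta> Ld xt n \<prec>\<^sub>m
              (1 - h * (H / (1 + B) powr \<beta>)) ^ n \<cdot>\<^sub>m (lower_ones k ^\<^sub>m n)"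
proof -
  interpret hierarchical_flock k H \<beta> h B Ld xt
    using assms by unfold_locales
  show ?thesis
    using flock_S_prec flock_Sprod_prec unfolding \<rho>_def d_min_def by blast
qed

end
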